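(* Assume $\|\cdot\|=|||\cdot|||=\|\cdot\|_2$. Then: (a) For $L_1,L_2\in\mathrm{Gr}(V,m)$, $\|\Pi_{L_1}-\Pi_{L_2}\|_2=\operatorname{dist}(L_1,L_2)=\overline{\operatorname{dist}}(L_1,L_2)$, where $\Pi_{L_i}$ is the orthogonal projection onto $L_i$ and $\|\Pi_{L_1}-\Pi_{L_2}\|_2=\max_{\|x\|_2=1}\|(\Pi_{L_1}-\Pi_{L_2})x\|_2$. (b) If $L\in\mathrm{Gr}(V,m)$ and $L\cap\operatorname{int}(K)\neq\emptyset$, then $\nu(L)=\sin\angle(L^\perp,K^* )$. (c) If $L\in\mathrm{Gr}(V,m)$ and $L^\perp\cap\operatorname{int}(K^* )\neq\emptyset$, then $\bar\nu(L)=\sin\angle(L,K)$.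
   Context: $V$ is a finite-dimensional real vector space with inner product $\langle\cdot,\cdot\rangle$ and Euclidean norm $\|v\|_2=\sqrt{\langle v,v\rangle}$; $K\subseteq V$ is a regular closed convex cone with dual cone $K^*:=\{u:\langle u,x\rangle\ge0\ \forall x\in K\}$; $\mathrm{Gr}(V,m)$ is the set of $m$-dimensional subspaces ($1\le m<\dim V$), $L^\perp$ the orthogonal complement. With norms $\|\cdot\|,|||\cdot|||$ on $V$ (dual norms $\|u\|^*:=\max_{\|x\|=1}\langle u,x\rangle$, similarly $|||\cdot|||^*$): $\operatorname{dist}(L_1,L_2):=\max_{x\in L_1,x\neq0}\min_{v\in L_2}\frac{|||x-v|||}{\|x\|}$, $\overline{\operatorname{dist}}(L_1,L_2):=\max_{x\in L_1,x\neq0}\inf_{v\in L_2,v\neq0}\frac{|||x-v|||}{\|v\|}$, $\nu(L):=\min\{\|y-u\|^*:u\in K^*,y\in L^\perp,|||u|||^*=1\}$, $\bar\nu(L):=\min\{|||v-x|||:v\in K,x\in L,\|x\|=1\}$. For $x,y\neq0$, $\angle(x,y):=\arccos\frac{\langle x,y\rangle}{\|x\|_2\|y\|_2}\in[0,\pi]$; for a linear subspace $L$ and closed convex cone $C$, $\angle(L,C):=\min\{\angle(x,v):x\in L\setminus\{0\},v\in C\setminus\{0\}\}$. *)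

theory Defs
  imports "HOL-Analysis.Analysis"
begin

definition regular_cone :: "'a::euclidean_space set \<Rightarrow> bool" where
  "regular_cone K \<longleftrightarrow> closed K \<and> convex K \<and> cone K \<and> interior K \<noteq> {}
     \<and> K \<inter> uminus ` K = {0}"

definition dual_cone :: "'a::euclidean_space set \<Rightarrow> 'a set" where
  "dual_cone K = {u. \<forall>x\<in>K. 0 \<le> inner u x}"

definition Gr :: "nat \<Rightarrow> 'a::euclidean_space set set" where
  "Gr m = {L. subspace L \<and> dim L = m}"

definition dual_norm :: "('a::euclidean_space \<Rightarrow> real) \<Rightarrow> 'a \<Rightarrow> real" where
  "dual_norm N u = Sup {inner u x | x. N x = 1}"

text \<open>dist(L1,L2) with norms N (= \<parallel>.\<parallel>) and M (= |||.|||).\<close>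
definition sdist :: "('a::euclidean_space \<Rightarrow> real) \<Rightarrow> ('a \<Rightarrow> real) \<Rightarrow> 'a set \<Rightarrow> 'a set \<Rightarrow> real" where
  "sdist N M L1 L2 = Sup ((\<lambda>x. Inf ((\<lambda>v. M (x - v) / N x) ` L2)) ` (L1 - {0}))"

definition sdist_bar :: "('a::euclidean_space \<Rightarrow> real) \<Rightarrow> ('a \<Rightarrow> real) \<Rightarrow> 'a set \<Rightarrow> 'a set \<Rightarrow> real" where
  "sdist_bar N M L1 L2 = Sup ((\<lambda>x. Inf ((\<lambda>v. M (x - v) / N v) ` (L2 - {0}))) ` (L1 - {0}))"

definition nu :: "('a::euclidean_space \<Rightarrow> real) \<Rightarrow> ('a \<Rightarrow> real) \<Rightarrow> 'a set \<Rightarrow> 'a set \<Rightarrow> real" where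
  "nu N M K L = Inf {dual_norm N (y - u) | u y. u \<in> dual_cone K \<and> y \<in> orthogonal_comp L \<and> dual_norm M u = 1}"

definition nu_bar :: "('a::euclidean_space \<Rightarrow> real) \<Rightarrow> ('a \<Rightarrow> real) \<Rightarrow> 'a set \<Rightarrow> 'a set \<Rightarrow> real" where
  "nu_bar N M K L = Inf {M (v - x) | v x. v \<in> K \<and> x \<in> L \<and> N x = 1}"

definition vec_angle :: "'a::euclidean_space \<Rightarrow> 'a \<Rightarrow> real" where
  "vec_angle x y = arccos (inner x y / (norm x * norm y))"

definition sub_cone_angle :: "'a::euclidean_space set \<Rightarrow> 'a set \<Rightarrow> real" where
  "sub_cone_angle L C = Inf {vec_angle x v | x v. x \<in> L - {0} \<and> v \<in> C - {0}}"

definition orth_proj :: "'a::euclidean_space set \<Rightarrow> 'a \<Rightarrow> 'a" where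
  "orth_proj L x = (THE p. p \<in> L \<and> (\<forall>y\<in>L. inner (x - p) y = 0))"

definition op_norm2 :: "('a::euclidean_space \<Rightarrow> 'a) \<Rightarrow> real" where
  "op_norm2 f = Sup {norm (f x) | x. norm x = 1}"

end

theory Submission
  imports Defs
begin

text \<open>
  (a) Let the gap of \<open>L\<^sub>1\<close> to \<open>L\<^sub>2\<close> be the supremum of \<open>\<parallel>x - \<Pi>\<^sub>2 x\<parallel> / \<parallel>x\<parallel>\<close> over
  \<open>x \<in> L\<^sub>1\<close>. The infimum in \<open>dist\<close> is attained at the projection. The infimum in
  \<open>dist\<close> with bar gives the same value: \<open>\<parallel>x - v\<parallel> / \<parallel>v\<parallel>\<close> is at least the sine of the angle
  between \<open>x\<close> and \<open>L\<^sub>2\<close>, with equality at the point \<open>v\<close> of the ray through \<open>\<Pi>\<^sub>2 x\<close> for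
  which \<open>x - v \<bottom> x\<close>. If the gap \<open>d\<close> is below 1, then \<open>\<Pi>\<^sub>2\<close> is injective on \<open>L\<^sub>1\<close>, hence
  onto \<open>L\<^sub>2\<close> by equality of dimensions, and writing \<open>y = \<Pi>\<^sub>2 x\<close> the identity
  \<open>\<parallel>y\<parallel>\<^sup>2 = \<langle>x, \<Pi>\<^sub>1 y\<rangle>\<close> bounds the gap back by \<open>d\<close>; so the gap is symmetric. Finally
  \<open>(\<Pi>\<^sub>1 - \<Pi>\<^sub>2) x = (p - \<Pi>\<^sub>2 p) - \<Pi>\<^sub>2 q\<close> with \<open>p = \<Pi>\<^sub>1 x\<close>, \<open>q = x - p\<close> is an orthogonal sum
  whose terms are bounded by \<open>d \<parallel>p\<parallel>\<close> and \<open>d \<parallel>q\<parallel>\<close>.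

  (b), (c) With Euclidean norms, \<open>\<nu>\<close> and \<open>\<nu>\<close> with bar are distances from the unit
  sphere of one cone to another cone. For a pair of rays at cosine \<open>c \<ge> 0\<close> this distance
  is \<open>\<surd>(1 - c\<^sup>2)\<close>, so the infimum is the sine of the smallest angle, which is at most
  \<open>\<pi>/2\<close> because one of the cones is a subspace.
\<close>

section \<open>Orthogonal projection\<close>

lemma orth_proj_ex1:
  fixes L :: "'a::euclidean_space set"
  assumes "subspace L"
  shows "\<exists>!p. p \<in> L \<and> (\<forall>y\<in>L. inner (x - p) y = 0)"
proof -
  obtain p q where "p \<in> span L" "\<And>w. w \<in> span L \<Longrightarrow> orthogonal q w" "x = p + q"
    using orthogonal_subspace_decomp_exists by blast
  moreover have "span L = L" using assms by simp
  ultimately have p: "p \<in> L \<and> (\<forall>y\<in>L. inner (x - p) y = 0)"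
    by (auto simp: orthogonal_def)
  show ?thesis
  proof (rule ex1I[of _ p])
    fix p' assume p': "p' \<in> L \<and> (\<forall>y\<in>L. inner (x - p') y = 0)"
    then have "p - p' \<in> L" using p assms by (simp add: subspace_diff)
    then have "inner (x - p') (p - p') = 0" "inner (x - p) (p - p') = 0" using p p' by auto
    moreover have "inner (p - p') (p - p') = inner (x - p') (p - p') - inner (x - p) (p - p')"
      by (simp add: inner_diff_left)
    ultimately show "p' = p" by simp
  qed (rule p)
qed

lemma
  fixes L :: "'a::euclidean_space set"
  assumes "subspace L"
  shows orth_proj_in: "orth_proj L x \<in> L"
    and orth_proj_residual_orthogonal: "y \<in> L \<Longrightarrow> inner (x - orth_proj L x) y = 0"
  using theI'[OF orth_proj_ex1[OF assms, of x]] unfolding orth_proj_def by auto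

lemma orth_proj_eqI:
  fixes L :: "'a::euclidean_space set"
  assumes "subspace L" "p \<in> L" "\<And>y. y \<in> L \<Longrightarrow> inner (x - p) y = 0"
  shows "orth_proj L x = p"
  unfolding orth_proj_def by (rule the1_equality[OF orth_proj_ex1[OF assms(1)]]) (use assms in auto)

lemma orth_proj_id:
  fixes L :: "'a::euclidean_space set"
  assumes "subspace L" "x \<in> L"
  shows "orth_proj L x = x"
  using orth_proj_eqI[OF assms] by simp

lemma linear_orth_proj:
  fixes L :: "'a::euclidean_space set"
  assumes "subspace L"
  shows "linear (orth_proj L)"
proof (rule linearI)
  fix x y
  show "orth_proj L (x + y) = orth_proj L x + orth_proj L y"
  proof (rule orth_proj_eqI[OF assms])
    fix w assume "w \<in> L"
    then have "inner (x - orth_proj L x) w + inner (y - orth_proj L y) w = 0"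
      using orth_proj_residual_orthogonal[OF assms] by simp
    then show "inner (x + y - (orth_proj L x + orth_proj L y)) w = 0"
      by (simp add: inner_diff_left inner_add_left)
  qed (simp add: assms orth_proj_in subspace_add)
next
  fix c :: real and x
  show "orth_proj L (c *\<^sub>R x) = c *\<^sub>R orth_proj L x"
  proof (rule orth_proj_eqI[OF assms])
    fix w assume "w \<in> L"
    then have "c * inner (x - orth_proj L x) w = 0"
      using orth_proj_residual_orthogonal[OF assms] by simp
    then show "inner (c *\<^sub>R x - c *\<^sub>R orth_proj L x) w = 0"
      by (simp add: inner_diff_left)
  qed (simp add: assms orth_proj_in subspace_scale)
qed

lemma norm_orth_proj_Pythagorean:
  fixes L :: "'a::euclidean_space set"
  assumes "subspace L"
  shows "(norm x)\<^sup>2 = (norm (orth_proj L x))\<^sup>2 + (norm (x - orth_proj L x))\<^sup>2"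
proof -
  have "orthogonal (orth_proj L x) (x - orth_proj L x)"
    using orth_proj_residual_orthogonal[OF assms orth_proj_in[OF assms]]
    by (simp add: orthogonal_def inner_commute)
  then show ?thesis
    using norm_add_Pythagorean[of "orth_proj L x" "x - orth_proj L x"] by simp
qed

lemma orth_proj_self_adjoint:
  fixes L :: "'a::euclidean_space set"
  assumes "subspace L"
  shows "inner (orth_proj L x) y = inner x (orth_proj L y)"
proof -
  have "inner (orth_proj L x) (y - orth_proj L y) = 0" "inner (x - orth_proj L x) (orth_proj L y) = 0"
    using orth_proj_residual_orthogonal[OF assms orth_proj_in[OF assms]] by (simp_all add: inner_commute)
  then show ?thesis by (simp add: inner_diff_left inner_diff_right)
qed

lemma orth_proj_nearest:
  fixes L :: "'a::euclidean_space set"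
  assumes "subspace L" "v \<in> L"
  shows "norm (x - orth_proj L x) \<le> norm (x - v)"
proof -
  have "orthogonal (x - orth_proj L x) (orth_proj L x - v)"
    using assms by (simp add: orthogonal_def orth_proj_residual_orthogonal orth_proj_in subspace_diff)
  then have "(norm (x - v))\<^sup>2 = (norm (x - orth_proj L x))\<^sup>2 + (norm (orth_proj L x - v))\<^sup>2"
    using norm_add_Pythagorean[of "x - orth_proj L x" "orth_proj L x - v"] by simp
  moreover have "0 \<le> (norm (orth_proj L x - v))\<^sup>2" by simp
  ultimately have "(norm (x - orth_proj L x))\<^sup>2 \<le> (norm (x - v))\<^sup>2" by linarith
  then show ?thesis by (rule power2_le_imp_le) simp
qed

lemma norm_diff_orth_proj_le:
  fixes L :: "'a::euclidean_space set"
  assumes "subspace L"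
  shows "norm (x - orth_proj L x) \<le> norm x"
  using orth_proj_nearest[OF assms subspace_0[OF assms]] by simp

section \<open>Angles and distances between cones\<close>

definition angle_cosines :: "'a::euclidean_space set \<Rightarrow> 'a set \<Rightarrow> real set" where
  "angle_cosines A B = {inner x v / (norm x * norm v) | x v. x \<in> A - {0} \<and> v \<in> B - {0}}"

lemma abs_angle_cosine_le_one:
  fixes A B :: "'a::euclidean_space set"
  assumes "c \<in> angle_cosines A B"
  shows "\<bar>c\<bar> \<le> 1"
proof -
  obtain x v :: 'a where "c = inner x v / (norm x * norm v)"
    using assms by (auto simp: angle_cosines_def)
  moreover have "\<bar>inner x v\<bar> \<le> norm x * norm v" by (rule Cauchy_Schwarz_ineq2)
  ultimately show ?thesis by (cases "x = 0 \<or> v = 0") (auto simp: abs_divide divide_le_eq_1)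
qed

lemma abs_cSup_le:
  fixes C :: "real set"
  assumes "C \<noteq> {}" "\<And>c. c \<in> C \<Longrightarrow> \<bar>c\<bar> \<le> M"
  shows "\<bar>Sup C\<bar> \<le> M"
proof -
  obtain c0 where c0: "c0 \<in> C" using assms(1) by blast
  have "bdd_above C" using assms(2) by (meson abs_le_D1 bdd_aboveI)
  then have "- M \<le> Sup C" using assms(2)[OF c0] cSup_upper[OF c0] by linarith
  moreover have "Sup C \<le> M" using assms by (auto simp: abs_le_iff intro!: cSup_least)
  ultimately show ?thesis by simp
qed

lemma Inf_arccos_image:
  fixes C :: "real set"
  assumes "C \<noteq> {}" "\<And>c. c \<in> C \<Longrightarrow> \<bar>c\<bar> \<le> 1"
  shows "Inf (arccos ` C) = arccos (Sup C)"
proof -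
  have bdd: "bdd_above C" using assms(2) by (meson abs_le_D1 bdd_aboveI)
  obtain c0 where c0: "c0 \<in> C" using assms(1) by blast
  have S: "- 1 \<le> Sup C" "Sup C \<le> 1" using abs_cSup_le[OF assms] by (simp_all add: abs_le_iff)
  show ?thesis
  proof (rule cInf_eq_non_empty)
    fix y assume "y \<in> arccos ` C"
    then show "arccos (Sup C) \<le> y"
      using assms(2) S cSup_upper[OF _ bdd] by (auto simp: abs_le_iff intro!: arccos_le_arccos)
  next
    fix y assume lower: "\<And>z. z \<in> arccos ` C \<Longrightarrow> y \<le> z"
    show "y \<le> arccos (Sup C)"
    proof (cases "y < 0")
      case False
      have "y \<le> pi" using lower[of "arccos c0"] c0 assms(2)[OF c0] arccos_ubound[of c0]
        by (auto simp: abs_le_iff)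
      have "c \<le> cos y" if "c \<in> C" for c
      proof -
        have "cos (arccos c) \<le> cos y"
          using lower[of "arccos c"] that False \<open>y \<le> pi\<close> assms(2)[OF that] arccos_ubound[of c]
          by (intro cos_monotone_0_pi_le) (auto simp: abs_le_iff)
        then show ?thesis using assms(2)[OF that] by (simp add: abs_le_iff)
      qed
      then have "Sup C \<le> cos y" using assms(1) by (intro cSup_least)
      then have "arccos (cos y) \<le> arccos (Sup C)" using S by (intro arccos_le_arccos) auto
      then show ?thesis using arccos_cos[of y] False \<open>y \<le> pi\<close> by simp
    qed (use S arccos_lbound in fastforce)
  qed (use assms in simp)
qed

lemma sin_sub_cone_angle:
  fixes A B :: "'a::euclidean_space set"
  assumes "A - {0} \<noteq> {}" "B - {0} \<noteq> {}"
  shows "sin (sub_cone_angle A B) = sqrt (1 - (Sup (angle_cosines A B))\<^sup>2)"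
proof -
  have ne: "angle_cosines A B \<noteq> {}" using assms unfolding angle_cosines_def by blast
  have "sub_cone_angle A B = Inf (arccos ` angle_cosines A B)"
    unfolding sub_cone_angle_def angle_cosines_def vec_angle_def by (rule arg_cong[of _ _ Inf]) blast
  also have "\<dots> = arccos (Sup (angle_cosines A B))"
    using ne abs_angle_cosine_le_one by (rule Inf_arccos_image)
  moreover have "\<bar>Sup (angle_cosines A B)\<bar> \<le> 1"
    using ne abs_angle_cosine_le_one by (rule abs_cSup_le)
  ultimately show ?thesis by (simp add: sin_arccos abs_le_iff)
qed

lemma vec_angle_commute: "vec_angle x y = vec_angle y x"
  by (simp add: vec_angle_def inner_commute mult.commute)

lemma sub_cone_angle_commute:
  fixes A B :: "'a::euclidean_space set"
  shows "sub_cone_angle A B = sub_cone_angle B A"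
  unfolding sub_cone_angle_def by (rule arg_cong[of _ _ Inf]) (blast intro: vec_angle_commute)

lemma sqrt_one_minus_square_le_norm_diff:
  fixes z w :: "'a::real_inner"
  assumes "norm w = 1" "inner z w \<le> S * norm z" "0 \<le> S"
  shows "sqrt (1 - S\<^sup>2) \<le> norm (z - w)"
proof (rule real_le_lsqrt)
  have "(norm (z - w))\<^sup>2 = (norm z)\<^sup>2 - 2 * inner z w + 1"
    using dot_norm_neg[of z w] assms(1) by simp
  also have "\<dots> \<ge> (norm z - S)\<^sup>2 + (1 - S\<^sup>2)"
    using assms(2) by (simp add: power2_eq_square algebra_simps)
  finally show "1 - S\<^sup>2 \<le> (norm (z - w))\<^sup>2" using zero_le_power2[of "norm z - S"] by linarith
qed simp

lemma norm_diff_unit_eq: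
  fixes a b :: "'a::real_inner"
  assumes "norm a = 1" "norm b = c" "inner b a = c * c"
  shows "norm (b - a) = sqrt (1 - c\<^sup>2)"
proof -
  have "(norm (b - a))\<^sup>2 = 1 - c\<^sup>2"
    using dot_norm_neg[of b a] assms by (simp add: power2_eq_square)
  then show ?thesis by (metis norm_ge_zero real_sqrt_unique)
qed

lemma le_sqrt_one_minus_Sup_square:
  fixes C :: "real set"
  assumes "C \<noteq> {}" "0 \<le> Sup C" "0 \<le> t" "t \<le> 1"
    and le: "\<And>c. c \<in> C \<Longrightarrow> 0 \<le> c \<Longrightarrow> t \<le> sqrt (1 - c\<^sup>2)"
  shows "t \<le> sqrt (1 - (Sup C)\<^sup>2)"
proof (rule real_le_rsqrt)
  have t2: "0 \<le> 1 - t\<^sup>2" using assms(3,4) by (simp add: power_le_one)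
  have "c \<le> sqrt (1 - t\<^sup>2)" if "c \<in> C" for c
  proof (cases "0 \<le> c")
    case True
    have "0 \<le> sqrt (1 - c\<^sup>2)" using le[OF that True] assms(3) by linarith
    then have "t\<^sup>2 \<le> 1 - c\<^sup>2" using le[OF that True] assms(3) by (metis power_mono real_sqrt_ge_0_iff real_sqrt_pow2)
    then show ?thesis by (intro real_le_rsqrt) simp
  qed (use real_sqrt_ge_zero[OF t2] in linarith)
  then have "Sup C \<le> sqrt (1 - t\<^sup>2)" using assms(1) by (intro cSup_least)
  then have "(Sup C)\<^sup>2 \<le> 1 - t\<^sup>2" using assms(2) t2 by (metis power_mono real_sqrt_pow2)
  then show "t\<^sup>2 \<le> 1 - (Sup C)\<^sup>2" by simp
qed

text \<open>The acute pair is needed: for two opposite rays the infimum is 1 but the angle is \<open>\<pi>\<close>.\<close>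

lemma Inf_norm_diff_unit_cone:
  fixes A B :: "'a::euclidean_space set"
  assumes cones: "cone A" "cone B"
    and a: "a \<in> A" "a \<noteq> 0" and b: "b \<in> B" "b \<noteq> 0" and acute: "0 \<le> inner a b"
  shows "Inf {norm (y - x) | x y. x \<in> A \<and> y \<in> B \<and> norm x = 1} = sin (sub_cone_angle A B)"
proof -
  define C where "C = angle_cosines A B"
  define N where "N = {norm (y - x) | x y. x \<in> A \<and> y \<in> B \<and> norm x = 1}"
  have cos_in: "inner x y / (norm x * norm y) \<in> C" if "x \<in> A - {0}" "y \<in> B - {0}" for x y
    using that unfolding C_def angle_cosines_def by blast
  have bdd: "bdd_above C"
    using abs_angle_cosine_le_one unfolding C_def by (meson abs_le_D1 bdd_aboveI)
  have ab: "inner a b / (norm a * norm b) \<in> C" using a b by (intro cos_in) auto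
  moreover have "0 \<le> inner a b / (norm a * norm b)" using acute by simp
  ultimately have S0: "0 \<le> Sup C" using cSup_upper[OF _ bdd] by fastforce
  have "sin (sub_cone_angle A B) = sqrt (1 - (Sup C)\<^sup>2)"
    unfolding C_def using a b by (intro sin_sub_cone_angle) auto
  moreover have "Inf N = sqrt (1 - (Sup C)\<^sup>2)"
  proof (rule antisym)
    have "norm (y - x) \<ge> sqrt (1 - (Sup C)\<^sup>2)" if "x \<in> A" "y \<in> B" "norm x = 1" for x y
    proof (rule sqrt_one_minus_square_le_norm_diff[OF \<open>norm x = 1\<close> _ S0])
      show "inner y x \<le> Sup C * norm y"
      proof (cases "y = 0")
        case False
        then have "inner x y / (norm x * norm y) \<in> C" using that by (intro cos_in) auto
        then have "inner x y / (norm x * norm y) \<le> Sup C" using bdd by (rule cSup_upper)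
        then show ?thesis using False \<open>norm x = 1\<close> by (simp add: inner_commute divide_le_eq)
      qed simp
    qed
    moreover have "1 \<in> N"
    proof -
      have "a /\<^sub>R norm a \<in> A" using a cones(1) by (simp add: mem_cone)
      moreover have "0 \<in> B" using b cones(2) cone_contains_0 by blast
      ultimately show ?thesis unfolding N_def using a by force
    qed
    ultimately show "sqrt (1 - (Sup C)\<^sup>2) \<le> Inf N"
      unfolding N_def by (intro cInf_greatest) auto
    have bdd_N: "bdd_below N" unfolding N_def by (intro bdd_belowI[of _ 0]) auto
    show "Inf N \<le> sqrt (1 - (Sup C)\<^sup>2)"
    proof (rule le_sqrt_one_minus_Sup_square[OF _ S0])
      show "C \<noteq> {}" using ab by blast
      show "0 \<le> Inf N" using \<open>1 \<in> N\<close> unfolding N_def by (intro cInf_greatest) auto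
      show "Inf N \<le> 1" using \<open>1 \<in> N\<close> bdd_N by (rule cInf_lower)
      fix c assume "c \<in> C" "0 \<le> c"
      then obtain x v where xv: "x \<in> A" "x \<noteq> 0" "v \<in> B" "v \<noteq> 0" "c = inner x v / (norm x * norm v)"
        unfolding C_def angle_cosines_def by blast
      define x' where "x' = x /\<^sub>R norm x"
      define v' where "v' = (c / norm v) *\<^sub>R v"
      have "x' \<in> A" "norm x' = 1" using xv cones(1) by (simp_all add: x'_def mem_cone)
      moreover have "v' \<in> B"
        unfolding v'_def using \<open>0 \<le> c\<close> by (intro mem_cone[OF cones(2) xv(3)]) simp
      moreover have "norm (v' - x') = sqrt (1 - c\<^sup>2)"
        using xv \<open>0 \<le> c\<close> by (intro norm_diff_unit_eq) (auto simp: x'_def v'_def inner_commute field_simps)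
      ultimately have "sqrt (1 - c\<^sup>2) \<in> N" unfolding N_def by force
      then show "Inf N \<le> sqrt (1 - c\<^sup>2)" using bdd_N by (rule cInf_lower)
    qed
  qed
  ultimately show ?thesis unfolding N_def by simp
qed

lemma dual_norm_norm:
  fixes u :: "'a::euclidean_space"
  shows "dual_norm norm u = norm u"
  unfolding dual_norm_def
proof (rule cSup_eq_maximum)
  obtain b :: 'a where "b \<in> Basis" using nonempty_Basis by blast
  define x where "x = (if u = 0 then b else u /\<^sub>R norm u)"
  have "norm x = 1" using \<open>b \<in> Basis\<close> by (simp add: x_def)
  moreover have "inner u x = norm u"
    by (cases "u = 0") (simp_all add: x_def power2_norm_eq_inner[symmetric] power2_eq_square)
  ultimately show "norm u \<in> {inner u x | x. norm x = 1}" by force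
next
  fix y assume "y \<in> {inner u x | x. norm x = 1}"
  then obtain x where "norm x = 1" "y = inner u x" by blast
  then show "y \<le> norm u" using norm_cauchy_schwarz[of u x] by simp
qed

lemma cone_dual_cone: "cone (dual_cone K)"
  by (auto simp: cone_def dual_cone_def)

lemma nu_bar_norm_eq_sin_angle:
  fixes K L :: "'a::euclidean_space set"
  assumes "cone K" "K - {0} \<noteq> {}" "subspace L" "L - {0} \<noteq> {}"
  shows "nu_bar norm norm K L = sin (sub_cone_angle L K)"
proof -
  obtain k l where k: "k \<in> K" "k \<noteq> 0" and l: "l \<in> L" "l \<noteq> 0" using assms(2,4) by blast
  obtain l' where "l' \<in> L" "l' \<noteq> 0" "0 \<le> inner l' k"
    using l subspace_neg[OF assms(3) l(1)] by (cases "0 \<le> inner l k") (auto intro: that)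
  have "nu_bar norm norm K L = Inf {norm (y - x) | x y. x \<in> L \<and> y \<in> K \<and> norm x = 1}"
    unfolding nu_bar_def by (rule arg_cong[of _ _ Inf]) blast
  also have "\<dots> = sin (sub_cone_angle L K)"
    using subspace_imp_cone[OF assms(3)] assms(1) \<open>l' \<in> L\<close> \<open>l' \<noteq> 0\<close> k \<open>0 \<le> inner l' k\<close>
    by (rule Inf_norm_diff_unit_cone)
  finally show ?thesis .
qed

lemma nu_norm_eq_sin_angle:
  fixes K L :: "'a::euclidean_space set"
  assumes "dual_cone K - {0} \<noteq> {}" "orthogonal_comp L - {0} \<noteq> {}"
  shows "nu norm norm K L = sin (sub_cone_angle (orthogonal_comp L) (dual_cone K))"
proof -
  obtain u y where u: "u \<in> dual_cone K" "u \<noteq> 0" and y: "y \<in> orthogonal_comp L" "y \<noteq> 0"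
    using assms by blast
  obtain y' where "y' \<in> orthogonal_comp L" "y' \<noteq> 0" "0 \<le> inner u y'"
    using y subspace_neg[OF subspace_orthogonal_comp y(1)] by (cases "0 \<le> inner u y") (auto intro: that)
  have "nu norm norm K L = Inf {norm (y - u) | u y. u \<in> dual_cone K \<and> y \<in> orthogonal_comp L \<and> norm u = 1}"
    unfolding nu_def dual_norm_norm ..
  also have "\<dots> = sin (sub_cone_angle (dual_cone K) (orthogonal_comp L))"
    using cone_dual_cone subspace_imp_cone[OF subspace_orthogonal_comp] u
      \<open>y' \<in> orthogonal_comp L\<close> \<open>y' \<noteq> 0\<close> \<open>0 \<le> inner u y'\<close>
    by (rule Inf_norm_diff_unit_cone)
  finally show ?thesis by (simp add: sub_cone_angle_commute)
qed

section \<open>The gap between two subspaces\<close>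

definition subspace_gap :: "'a::euclidean_space set \<Rightarrow> 'a set \<Rightarrow> real" where
  "subspace_gap L1 L2 = Sup ((\<lambda>x. norm (x - orth_proj L2 x) / norm x) ` (L1 - {0}))"

lemma norm_diff_orth_proj_le_subspace_gap:
  fixes L1 L2 :: "'a::euclidean_space set"
  assumes "subspace L2" "x \<in> L1"
  shows "norm (x - orth_proj L2 x) \<le> subspace_gap L1 L2 * norm x"
proof (cases "x = 0")
  case True
  then show ?thesis using linear_0[OF linear_orth_proj[OF assms(1)]] by simp
next
  case False
  have "bdd_above ((\<lambda>x. norm (x - orth_proj L2 x) / norm x) ` (L1 - {0}))"
    using norm_diff_orth_proj_le[OF assms(1)] by (intro bdd_aboveI[of _ 1]) (auto simp: divide_le_eq_1)
  then have "norm (x - orth_proj L2 x) / norm x \<le> subspace_gap L1 L2"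
    unfolding subspace_gap_def using assms(2) False by (intro cSup_upper) auto
  then show ?thesis using False by (simp add: divide_le_eq)
qed

lemma subspace_gap_nonneg:
  fixes L1 L2 :: "'a::euclidean_space set"
  assumes "subspace L2" "L1 - {0} \<noteq> {}"
  shows "0 \<le> subspace_gap L1 L2"
proof -
  obtain x where "x \<in> L1" "x \<noteq> 0" using assms(2) by blast
  then have "0 \<le> subspace_gap L1 L2 * norm x"
    using norm_diff_orth_proj_le_subspace_gap[OF assms(1)] norm_ge_zero order_trans by blast
  then show ?thesis using \<open>x \<noteq> 0\<close> by (simp add: zero_le_mult_iff)
qed

lemma subspace_gap_least:
  fixes L1 L2 :: "'a::euclidean_space set"
  assumes "L1 - {0} \<noteq> {}" "\<And>x. x \<in> L1 \<Longrightarrow> norm (x - orth_proj L2 x) \<le> c * norm x"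
  shows "subspace_gap L1 L2 \<le> c"
  unfolding subspace_gap_def using assms by (intro cSup_least) (auto simp: divide_le_eq)

lemma Inf_norm_diff_div_norm:
  fixes L :: "'a::euclidean_space set"
  assumes "subspace L" "x \<noteq> 0"
  shows "Inf ((\<lambda>v. norm (x - v) / norm x) ` L) = norm (x - orth_proj L x) / norm x"
proof (rule cInf_eq_minimum)
  show "norm (x - orth_proj L x) / norm x \<in> (\<lambda>v. norm (x - v) / norm x) ` L"
    using orth_proj_in[OF assms(1)] by blast
qed (use orth_proj_nearest[OF assms(1)] in \<open>auto intro: divide_right_mono\<close>)

lemma sdist_norm_eq_subspace_gap:
  fixes L1 L2 :: "'a::euclidean_space set"
  assumes "subspace L2"
  shows "sdist norm norm L1 L2 = subspace_gap L1 L2"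
  unfolding sdist_def subspace_gap_def
  using Inf_norm_diff_div_norm[OF assms] by (intro arg_cong[of _ _ Sup] image_cong) auto

lemma orth_proj_residual_ratio_le:
  fixes L :: "'a::euclidean_space set"
  assumes "subspace L" "v \<in> L" "v \<noteq> 0" "x \<noteq> 0"
  shows "norm (x - orth_proj L x) / norm x \<le> norm (x - v) / norm v"
proof -
  let ?p = "orth_proj L x"
  \<comment> \<open>after rescaling by \<open>\<parallel>v\<parallel>\<close>, \<open>v\<close> is a unit vector whose cosine with \<open>x\<close> is at most \<open>S\<close>\<close>
  define S where "S = norm ?p / norm x"
  have "inner x v = inner ?p v"
    using orth_proj_residual_orthogonal[OF assms(1,2)] by (simp add: inner_diff_left)
  also have "\<dots> \<le> norm ?p * norm v" by (rule norm_cauchy_schwarz)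
  finally have "inner (x /\<^sub>R norm v) (v /\<^sub>R norm v) \<le> S * norm (x /\<^sub>R norm v)"
    using assms(3,4) by (simp add: S_def field_simps power2_eq_square)
  then have "sqrt (1 - S\<^sup>2) \<le> norm (x /\<^sub>R norm v - v /\<^sub>R norm v)"
    using assms(3) by (intro sqrt_one_minus_square_le_norm_diff) (simp_all add: S_def)
  moreover have "norm (x /\<^sub>R norm v - v /\<^sub>R norm v) = norm (x - v) / norm v"
    by (simp flip: scaleR_diff_right add: divide_inverse_commute)
  moreover have "1 - S\<^sup>2 = (norm (x - ?p) / norm x)\<^sup>2"
    using norm_orth_proj_Pythagorean[OF assms(1), of x] assms(4)
    by (simp add: S_def power_divide field_simps)
  ultimately show ?thesis by simp
qed

lemma Inf_norm_diff_div_norm_nonzero: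
  fixes L :: "'a::euclidean_space set"
  assumes "subspace L" "L - {0} \<noteq> {}" "x \<noteq> 0"
  shows "Inf ((\<lambda>v. norm (x - v) / norm v) ` (L - {0})) = norm (x - orth_proj L x) / norm x"
    (is "Inf ?R = _")
proof (rule antisym)
  let ?p = "orth_proj L x"
  have bdd: "bdd_below ?R" by (intro bdd_belowI[of _ 0]) auto
  show "norm (x - ?p) / norm x \<le> Inf ?R"
    using assms orth_proj_residual_ratio_le by (intro cInf_greatest) auto
  show "Inf ?R \<le> norm (x - ?p) / norm x"
  proof (cases "?p = 0")
    case True
    \<comment> \<open>the infimum 1 is only approached, along a ray of \<open>L\<close> going to infinity\<close>
    obtain w where w: "w \<in> L" "w \<noteq> 0" using assms(2) by blast
    have "Inf ?R \<le> 1 + e" if "0 < e" for e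
    proof -
      define v where "v = (norm x / e / norm w) *\<^sub>R w"
      have v: "v \<in> L" "v \<noteq> 0" "norm v = norm x / e"
        using w that assms(1,3) by (auto simp: v_def subspace_scale)
      then have "Inf ?R \<le> norm (x - v) / norm v" by (intro cInf_lower[OF imageI bdd]) simp
      also have "\<dots> \<le> (norm x + norm v) / norm v" by (intro divide_right_mono norm_triangle_ineq4) simp
      also have "\<dots> = 1 + e" using v(2,3) that by (simp add: field_simps)
      finally show ?thesis .
    qed
    then show ?thesis using True assms(3) by (simp add: field_le_epsilon)
  next
    case False
    \<comment> \<open>the point \<open>v\<close> of the ray through \<open>?p\<close> with \<open>v - x \<bottom> x\<close> attains the infimum\<close>
    define t where "t = (norm x / norm ?p)\<^sup>2"
    define v where "v = t *\<^sub>R ?p"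
    have v: "v \<in> L" "v \<noteq> 0"
      using False assms(1,3) by (auto simp: v_def t_def orth_proj_in subspace_scale)
    have "inner (x - ?p) ?p = 0" by (simp add: assms(1) orth_proj_residual_orthogonal orth_proj_in)
    then have "inner ?p x = inner ?p ?p" by (simp add: inner_diff_right inner_commute)
    then have "inner (v - x) x = 0"
      using False by (simp add: v_def t_def inner_diff_left power_divide dot_square_norm)
    then have "(norm v)\<^sup>2 = (norm x)\<^sup>2 + (norm (x - v))\<^sup>2"
      using norm_add_Pythagorean[of x "v - x"] by (simp add: orthogonal_def inner_commute norm_minus_commute)
    moreover have "(norm ?p)\<^sup>2 * (norm v)\<^sup>2 = (norm x)\<^sup>2 * (norm x)\<^sup>2"
      using False by (simp add: v_def t_def power_divide power_mult_distrib eval_nat_numeral)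
    moreover have "(norm x)\<^sup>2 = (norm ?p)\<^sup>2 + (norm (x - ?p))\<^sup>2"
      by (rule norm_orth_proj_Pythagorean[OF assms(1)])
    ultimately have "(norm (x - v))\<^sup>2 * (norm x)\<^sup>2 = (norm (x - ?p))\<^sup>2 * (norm v)\<^sup>2"
      by algebra
    then have "(norm (x - v) / norm v)\<^sup>2 = (norm (x - ?p) / norm x)\<^sup>2"
      using v(2) assms(3) by (simp add: power_divide field_simps)
    then have "norm (x - v) / norm v = norm (x - ?p) / norm x"
      by (rule power2_eq_imp_eq) simp_all
    moreover have "Inf ?R \<le> norm (x - v) / norm v" using v bdd by (intro cInf_lower) auto
    ultimately show ?thesis by simp
  qed
qed

lemma sdist_bar_norm_eq_subspace_gap:
  fixes L1 L2 :: "'a::euclidean_space set"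
  assumes "subspace L2" "L2 - {0} \<noteq> {}"
  shows "sdist_bar norm norm L1 L2 = subspace_gap L1 L2"
  unfolding sdist_bar_def subspace_gap_def
  using Inf_norm_diff_div_norm_nonzero[OF assms] by (intro arg_cong[of _ _ Sup] image_cong) auto

lemma orth_proj_image_eq:
  fixes L1 L2 :: "'a::euclidean_space set"
  assumes "subspace L1" "subspace L2" "dim L1 = dim L2" "d < 1"
    and close: "\<And>x. x \<in> L1 \<Longrightarrow> norm (x - orth_proj L2 x) \<le> d * norm x"
  shows "orth_proj L2 ` L1 = L2"
proof -
  have lin: "linear (orth_proj L2)" by (rule linear_orth_proj[OF assms(2)])
  have "x = 0" if "x \<in> L1" "orth_proj L2 x = 0" for x
    using close[OF that(1)] that(2) assms(4) by (simp add: mult_le_cancel_right1)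
  then have "inj_on (orth_proj L2) L1"
    using linear_inj_on_iff_eq_0[OF lin assms(1)] by blast
  moreover have "span L1 = L1" using assms(1) by simp
  ultimately have "inj_on (orth_proj L2) (span L1)" by (simp only:)
  then have "dim (orth_proj L2 ` L1) = dim L1" by (rule dim_image_eq[OF lin])
  show ?thesis
  proof (rule subspace_dim_equal)
    show "orth_proj L2 ` L1 \<subseteq> L2" using orth_proj_in[OF assms(2)] by blast
  qed (use linear_subspace_image[OF lin assms(1)] assms(2,3) \<open>dim (orth_proj L2 ` L1) = dim L1\<close> in simp_all)
qed

lemma norm_diff_orth_proj_swap_le:
  fixes L1 L2 :: "'a::euclidean_space set"
  assumes "subspace L1" "subspace L2" "dim L1 = dim L2" "0 \<le> d"
    and close: "\<And>x. x \<in> L1 \<Longrightarrow> norm (x - orth_proj L2 x) \<le> d * norm x"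
    and y: "y \<in> L2"
  shows "norm (y - orth_proj L1 y) \<le> d * norm y"
proof (cases "d < 1")
  case False
  then have "norm y \<le> d * norm y" by (simp add: mult_le_cancel_right1)
  then show ?thesis using norm_diff_orth_proj_le[OF assms(1), of y] by linarith
next
  case True
  have "y \<in> orth_proj L2 ` L1" using orth_proj_image_eq[OF assms(1-3) True close] y by simp
  then obtain x where x: "x \<in> L1" "orth_proj L2 x = y" by blast
  let ?q = "orth_proj L1 y"
  have "(norm y)\<^sup>2 = inner (orth_proj L2 x) y" using x(2) by (simp add: power2_norm_eq_inner)
  also have "\<dots> = inner x y"
    using orth_proj_self_adjoint[OF assms(2), of x y] orth_proj_id[OF assms(2) y] by simp
  also have "\<dots> = inner x ?q"
    using orth_proj_self_adjoint[OF assms(1), of x y] orth_proj_id[OF assms(1) x(1)] by simp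
  also have "\<dots> \<le> norm x * norm ?q" by (rule norm_cauchy_schwarz)
  finally have y_le: "(norm y)\<^sup>2 \<le> norm x * norm ?q" .
  define s where "s = 1 - d\<^sup>2"
  have "0 \<le> s" using True assms(4) by (simp add: s_def power_le_one)
  have x_le: "s * (norm x)\<^sup>2 \<le> (norm y)\<^sup>2"
  proof -
    have "norm (x - y) \<le> d * norm x" using close[OF x(1)] x(2) by simp
    then have "(norm (x - y))\<^sup>2 \<le> d\<^sup>2 * (norm x)\<^sup>2"
      unfolding power_mult_distrib[symmetric] by (rule power_mono) simp
    then show ?thesis
      using norm_orth_proj_Pythagorean[OF assms(2), of x] x(2) by (simp add: s_def algebra_simps)
  qed
  have "s * norm x \<le> norm ?q"
  proof (cases "x = 0")
    case False
    have "norm x * (s * norm x) = s * (norm x)\<^sup>2" by (simp add: power2_eq_square)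
    then have "norm x * (s * norm x) \<le> norm x * norm ?q" using x_le y_le by linarith
    then show ?thesis by (rule mult_left_le_imp_le) (use False in simp)
  qed simp
  have "s * (norm y)\<^sup>2 \<le> (s * norm x) * norm ?q"
    using mult_left_mono[OF y_le \<open>0 \<le> s\<close>] by (simp add: mult.assoc)
  also have "\<dots> \<le> (norm ?q)\<^sup>2"
    using mult_right_mono[OF \<open>s * norm x \<le> norm ?q\<close> norm_ge_zero] by (simp add: power2_eq_square)
  finally have "(norm (y - ?q))\<^sup>2 \<le> (d * norm y)\<^sup>2"
    using norm_orth_proj_Pythagorean[OF assms(1), of y] by (simp add: s_def power_mult_distrib algebra_simps)
  then show ?thesis by (rule power2_le_imp_le) (use assms(4) in simp)
qed

lemma subspace_gap_commute:
  fixes L1 L2 :: "'a::euclidean_space set"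
  assumes "subspace L1" "subspace L2" "L1 - {0} \<noteq> {}" "L2 - {0} \<noteq> {}" "dim L1 = dim L2"
  shows "subspace_gap L1 L2 = subspace_gap L2 L1"
proof -
  have swap: "subspace_gap L2 L1 \<le> subspace_gap L1 L2"
    if "subspace L1" "subspace L2" "L1 - {0} \<noteq> {}" "L2 - {0} \<noteq> {}" "dim L1 = dim L2"
    for L1 L2 :: "'a set"
    using that norm_diff_orth_proj_swap_le[OF that(1,2,5) subspace_gap_nonneg[OF that(2,3)]]
      norm_diff_orth_proj_le_subspace_gap[OF that(2)]
    by (intro subspace_gap_least) auto
  show ?thesis using swap[OF assms] swap[OF assms(2,1,4,3) assms(5)[symmetric]] by simp
qed

lemma norm_orth_proj_of_orthogonal_le:
  fixes L1 L2 :: "'a::euclidean_space set"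
  assumes "subspace L1" "subspace L2" "0 \<le> d"
    and close: "\<And>y. y \<in> L2 \<Longrightarrow> norm (y - orth_proj L1 y) \<le> d * norm y"
    and "orth_proj L1 q = 0"
  shows "norm (orth_proj L2 q) \<le> d * norm q"
proof -
  let ?w = "orth_proj L2 q"
  have w: "?w \<in> L2" by (rule orth_proj_in[OF assms(2)])
  have "(norm ?w)\<^sup>2 = inner q ?w"
    using orth_proj_self_adjoint[OF assms(2), of q ?w] orth_proj_id[OF assms(2) w]
    by (simp add: power2_norm_eq_inner)
  also have "\<dots> = inner q (?w - orth_proj L1 ?w)"
    using orth_proj_self_adjoint[OF assms(1), of q ?w] assms(5) by (simp add: inner_diff_right)
  also have "\<dots> \<le> norm q * (d * norm ?w)"
    using norm_cauchy_schwarz[of q "?w - orth_proj L1 ?w"] close[OF w]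
    by (meson mult_left_mono norm_ge_zero order_trans)
  finally have "norm ?w * norm ?w \<le> (d * norm q) * norm ?w" by (simp add: power2_eq_square ac_simps)
  then show ?thesis
    using assms(3) by (cases "?w = 0") (auto dest: mult_right_le_imp_le)
qed

lemma norm_orth_proj_diff_le:
  fixes L1 L2 :: "'a::euclidean_space set"
  assumes "subspace L1" "subspace L2" "0 \<le> d"
    and close12: "\<And>x. x \<in> L1 \<Longrightarrow> norm (x - orth_proj L2 x) \<le> d * norm x"
    and close21: "\<And>y. y \<in> L2 \<Longrightarrow> norm (y - orth_proj L1 y) \<le> d * norm y"
  shows "norm (orth_proj L1 x - orth_proj L2 x) \<le> d * norm x"
proof -
  define p where "p = orth_proj L1 x"
  define q where "q = x - p"
  have p: "p \<in> L1" unfolding p_def by (rule orth_proj_in[OF assms(1)])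
  have "orth_proj L1 q = 0"
    using linear_diff[OF linear_orth_proj[OF assms(1)]] orth_proj_id[OF assms(1) p]
    by (simp add: q_def p_def)
  then have q_small: "norm (orth_proj L2 q) \<le> d * norm q"
    using norm_orth_proj_of_orthogonal_le[OF assms(1-3) close21] by blast
  have diff: "orth_proj L1 x - orth_proj L2 x = (p - orth_proj L2 p) + - orth_proj L2 q"
    using linear_add[OF linear_orth_proj[OF assms(2)], of p q] by (simp add: q_def p_def)
  have "orthogonal (p - orth_proj L2 p) (- orth_proj L2 q)"
    using orth_proj_residual_orthogonal[OF assms(2) orth_proj_in[OF assms(2)], of p q]
    by (simp add: orthogonal_def)
  then have "(norm (orth_proj L1 x - orth_proj L2 x))\<^sup>2
      = (norm (p - orth_proj L2 p))\<^sup>2 + (norm (orth_proj L2 q))\<^sup>2"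
    by (simp only: diff norm_add_Pythagorean norm_minus_cancel)
  also have "\<dots> \<le> (d * norm p)\<^sup>2 + (d * norm q)\<^sup>2"
    using close12[OF p] q_small by (intro add_mono power_mono) simp_all
  also have "\<dots> = (d * norm x)\<^sup>2"
    using norm_orth_proj_Pythagorean[OF assms(1), of x]
    by (simp add: p_def q_def power_mult_distrib distrib_left[symmetric])
  finally show ?thesis by (rule power2_le_imp_le) (use assms(3) in simp)
qed

lemma op_norm2_orth_proj_diff:
  fixes L1 L2 :: "'a::euclidean_space set"
  assumes "subspace L1" "subspace L2" "L1 - {0} \<noteq> {}" "L2 - {0} \<noteq> {}" "dim L1 = dim L2"
  shows "op_norm2 (\<lambda>x. orth_proj L1 x - orth_proj L2 x) = subspace_gap L1 L2"
proof -
  let ?d = "subspace_gap L1 L2"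
  define S where "S = {norm (orth_proj L1 x - orth_proj L2 x) | x. norm x = 1}"
  have close21: "norm (y - orth_proj L1 y) \<le> ?d * norm y" if "y \<in> L2" for y
    using norm_diff_orth_proj_le_subspace_gap[OF assms(1) that] subspace_gap_commute[OF assms] by simp
  have close12: "norm (x - orth_proj L2 x) \<le> ?d * norm x" if "x \<in> L1" for x
    using norm_diff_orth_proj_le_subspace_gap[OF assms(2) that] .
  have diff_le: "norm (orth_proj L1 x - orth_proj L2 x) \<le> ?d * norm x" for x
    using assms(1,2) subspace_gap_nonneg[OF assms(2,3)] close12 close21 by (rule norm_orth_proj_diff_le)
  have upper: "s \<le> ?d" if s: "s \<in> S" for s
  proof -
    obtain x where "norm x = 1" "s = norm (orth_proj L1 x - orth_proj L2 x)"
      using s unfolding S_def by blast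
    then show ?thesis using diff_le[of x] by simp
  qed
  have ratio_in: "norm (x - orth_proj L2 x) / norm x \<in> S" if "x \<in> L1" "x \<noteq> 0" for x
  proof -
    have "x /\<^sub>R norm x \<in> L1" using that assms(1) by (simp add: subspace_scale)
    then have "orth_proj L1 (x /\<^sub>R norm x) - orth_proj L2 (x /\<^sub>R norm x) = (x - orth_proj L2 x) /\<^sub>R norm x"
      using orth_proj_id[OF assms(1)] linear_cmul[OF linear_orth_proj[OF assms(2)]]
      by (simp add: scaleR_diff_right)
    then show ?thesis unfolding S_def using that(2)
      by (intro CollectI exI[of _ "x /\<^sub>R norm x"]) (simp add: divide_inverse_commute)
  qed
  have "Sup S = ?d"
  proof (rule antisym)
    show "Sup S \<le> ?d" using upper ratio_in assms(3) by (intro cSup_least) blast+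
    show "?d \<le> Sup S"
      unfolding subspace_gap_def using assms(3) ratio_in cSup_upper[OF _ bdd_aboveI[OF upper]]
      by (intro cSup_least) auto
  qed
  then show ?thesis by (simp add: op_norm2_def S_def)
qed

lemma Gr_nonzero:
  fixes L :: "'a::euclidean_space set"
  assumes "L \<in> Gr m" "1 \<le> m"
  shows "L - {0} \<noteq> {}"
proof
  assume "L - {0} = {}"
  then have "dim L = 0" by simp
  then show False using assms by (simp add: Gr_def del: dim_eq_0)
qed

lemma Gr_orthogonal_comp_nonzero:
  fixes L :: "'a::euclidean_space set"
  assumes "L \<in> Gr m" "m < DIM('a)"
  shows "orthogonal_comp L - {0} \<noteq> {}"
proof
  assume "orthogonal_comp L - {0} = {}"
  then have "orthogonal_comp L = {0}"
    using subspace_0[OF subspace_orthogonal_comp] by blast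
  then have "L = UNIV"
    using orthogonal_comp_self[of L] assms(1) by (simp add: Gr_def)
  then show False using assms by (simp add: Gr_def)
qed

lemma regular_cone_nonzero:
  fixes K :: "'a::euclidean_space set"
  assumes "regular_cone K"
  shows "K - {0} \<noteq> {}"
proof
  assume "K - {0} = {}"
  then have "interior K \<subseteq> interior {0}" by (intro interior_mono) blast
  then show False using assms by (simp add: regular_cone_def)
qed

lemma dual_cone_nonzero:
  fixes K :: "'a::euclidean_space set"
  assumes "closed K" "convex K" "cone K" "k \<in> K" "- k \<notin> K"
  shows "dual_cone K - {0} \<noteq> {}"
proof -
  obtain a c where ac: "inner a (- k) < c" "\<forall>x\<in>K. c < inner a x"
    using separating_hyperplane_closed_point[OF assms(2,1,5)] by blast
  have "0 \<in> K" using assms(3,4) cone_contains_0 by blast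
  then have "c < 0" using ac(2) by force
  have "0 \<le> inner a x" if "x \<in> K" for x
  proof (rule ccontr)
    assume "\<not> 0 \<le> inner a x"
    then have "(c / inner a x) *\<^sub>R x \<in> K"
      using \<open>c < 0\<close> mem_cone[OF assms(3) that] by (simp add: divide_nonpos_neg)
    then show False using ac(2) \<open>\<not> 0 \<le> inner a x\<close> by force
  qed
  then have "a \<in> dual_cone K" by (simp add: dual_cone_def)
  moreover have "a \<noteq> 0" using ac(1) \<open>c < 0\<close> by auto
  ultimately show ?thesis by blast
qed

lemma regular_cone_dual_cone_nonzero:
  fixes K :: "'a::euclidean_space set"
  assumes "regular_cone K"
  shows "dual_cone K - {0} \<noteq> {}"
proof -
  obtain k where k: "k \<in> K" "k \<noteq> 0" using regular_cone_nonzero[OF assms] by blast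
  have "- k \<notin> K"
  proof
    assume "- k \<in> K"
    then have "- k \<in> K \<inter> uminus ` K" using k(1) by force
    then have "- k \<in> {0}" using assms unfolding regular_cone_def by blast
    then show False using k(2) by simp
  qed
  then show ?thesis using assms k(1) by (intro dual_cone_nonzero) (auto simp: regular_cone_def)
qed

theorem mainTheorem6:
  fixes K :: "'a::euclidean_space set" and m :: nat
  assumes "regular_cone K" and "1 \<le> m" and "m < DIM('a)"
  shows "(\<forall>L1 \<in> (Gr m :: 'a set set). \<forall>L2 \<in> (Gr m :: 'a set set).
            op_norm2 (\<lambda>x. orth_proj L1 x - orth_proj L2 x) = sdist norm norm L1 L2
          \<and> sdist norm norm L1 L2 = sdist_bar norm norm L1 L2)
       \<and> (\<forall>L \<in> Gr m. L \<inter> interior K \<noteq> {} \<longrightarrow>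
            nu norm norm K L = sin (sub_cone_angle (orthogonal_comp L) (dual_cone K)))
       \<and> (\<forall>L \<in> Gr m. orthogonal_comp L \<inter> interior (dual_cone K) \<noteq> {} \<longrightarrow>
            nu_bar norm norm K L = sin (sub_cone_angle L K))"
\<comment> \<open>For Euclidean norms the identities in (b) and (c) hold without the interior hypotheses.\<close>
proof (intro conjI ballI impI)
  fix L1 L2 :: "'a set"
  assume "L1 \<in> Gr m" "L2 \<in> Gr m"
  then have "subspace L1" "subspace L2" "dim L1 = dim L2" "L1 - {0} \<noteq> {}" "L2 - {0} \<noteq> {}"
    using Gr_nonzero assms(2) by (auto simp: Gr_def)
  then show "op_norm2 (\<lambda>x. orth_proj L1 x - orth_proj L2 x) = sdist norm norm L1 L2"
    and "sdist norm norm L1 L2 = sdist_bar norm norm L1 L2"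
    by (simp_all add: op_norm2_orth_proj_diff sdist_norm_eq_subspace_gap sdist_bar_norm_eq_subspace_gap)
next
  fix L :: "'a set"
  assume "L \<in> Gr m"
  show "nu norm norm K L = sin (sub_cone_angle (orthogonal_comp L) (dual_cone K))"
    using regular_cone_dual_cone_nonzero[OF assms(1)] Gr_orthogonal_comp_nonzero[OF \<open>L \<in> Gr m\<close> assms(3)]
    by (rule nu_norm_eq_sin_angle)
  show "nu_bar norm norm K L = sin (sub_cone_angle L K)"
    using assms(1) regular_cone_nonzero[OF assms(1)] \<open>L \<in> Gr m\<close> Gr_nonzero[OF \<open>L \<in> Gr m\<close> assms(2)]
    by (intro nu_bar_norm_eq_sin_angle) (auto simp: regular_cone_def Gr_def)
qed

end
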